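(* Let $\psi\in L^2(\mathbb{R})$ be a Parseval wavelet, let $\eta$ be the Littlewood–Paley wavelet, and let $\Xi$ be the bounded linear operator on $L^2(\mathbb{R})$ with $\Xi(D^nT^\ell\eta)=D^nT^\ell\psi$ for all $(n,\ell)\in\mathbb{Z}^2$. Let $Q^\perp$ be the orthogonal projection onto $(\ker\Xi)^\perp$ and $W_0=\overline{\mathrm{span}}\{T^\ell\eta\mid \ell\in\mathbb{Z}\}$. Then $Q^\perp W_0\neq\{0\}$.
   Context: On $L^2(\mathbb{R})$, $(Tf)(t)=f(t-1)$ and $(Df)(t)=\sqrt2 f(2t)$. A Parseval wavelet is $\psi\in L^2(\mathbb{R})$ such that $\|x\|^2=\sum_{m,\ell\in\mathbb{Z}}|\langle x,D^mT^\ell\psi\rangle|^2$ for all $x\in L^2(\mathbb{R})$. The Littlewood–Paley wavelet $\eta$ is defined by $\widehat{\eta}=\frac{1}{\sqrt{2\pi}}\chi_{[-2\pi,-\pi]\cup[\pi,2\pi]}$ with $\widehat f(s)=\frac{1}{\sqrt{2\pi}}\int e^{-its}f(t)\,dt$; $\{D^nT^\ell\eta\}_{(n,\ell)\in\mathbb{Z}^2}$ is an orthonormal basis of $L^2(\mathbb{R})$, so $\Xi$ is well defined by $\Xi(\sum c_{n,\ell}D^nT^\ell\eta)=\sum c_{n,\ell}D^nT^\ell\psi$. *)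

theory Defs
  imports "HOL-Analysis.Analysis"
begin

text \<open>Elements of L2(R) are modelled as complex-valued functions on the reals;
  equality in L2 is equality almost everywhere, i.e. the L2 norm of the difference is 0.\<close>

type_synonym cfun = "real \<Rightarrow> complex"

definition L2 :: "cfun set" where
  "L2 = {f. f \<in> borel_measurable lborel \<and> integrable lborel (\<lambda>t. (cmod (f t))^2)}"

definition l2ip :: "cfun \<Rightarrow> cfun \<Rightarrow> complex" where
  "l2ip f g = (LINT t|lborel. f t * cnj (g t))"

definition l2norm :: "cfun \<Rightarrow> real" where
  "l2norm f = sqrt (LINT t|lborel. (cmod (f t))^2)"

definition Tp :: "int \<Rightarrow> cfun \<Rightarrow> cfun" where
  "Tp l f = (\<lambda>t. f (t - real_of_int l))"

definition Dp :: "int \<Rightarrow> cfun \<Rightarrow> cfun" where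
  "Dp m f = (\<lambda>t. complex_of_real (2 powr (real_of_int m / 2)) * f (2 powr (real_of_int m) * t))"

definition parseval_wavelet :: "cfun \<Rightarrow> bool" where
  "parseval_wavelet \<psi> \<longleftrightarrow> \<psi> \<in> L2 \<and>
     (\<forall>x\<in>L2. ((\<lambda>(m, l). (cmod (l2ip x (Dp m (Tp l \<psi>))))^2) has_sum (l2norm x)^2) UNIV)"

text \<open>Littlewood--Paley wavelet, defined through its (integrable) Fourier transform
  by Fourier inversion.\<close>

definition eta_hat :: "real \<Rightarrow> complex" where
  "eta_hat s = complex_of_real (1 / sqrt (2 * pi) *
      indicator ({-2*pi..-pi} \<union> {pi..2*pi}) s)"

definition eta :: cfun where
  "eta t = complex_of_real (1 / sqrt (2 * pi)) *
      (LINT s|lborel. exp (\<i> * complex_of_real (t * s)) * eta_hat s)"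

definition l2_span :: "cfun set \<Rightarrow> cfun set" where
  "l2_span S = {f. \<exists>F c. finite F \<and> F \<subseteq> S \<and> f = (\<lambda>t. \<Sum>g\<in>F. c g * g t)}"

definition l2_closure :: "cfun set \<Rightarrow> cfun set" where
  "l2_closure S = {f \<in> L2. \<forall>e>0. \<exists>g\<in>S. l2norm (\<lambda>t. f t - g t) < e}"

definition l2_ker :: "(cfun \<Rightarrow> cfun) \<Rightarrow> cfun set" where
  "l2_ker A = {f \<in> L2. l2norm (A f) = 0}"

definition l2_orth :: "cfun set \<Rightarrow> cfun set" where
  "l2_orth S = {g \<in> L2. \<forall>f\<in>S. l2ip f g = 0}"

definition is_l2_proj :: "cfun set \<Rightarrow> cfun \<Rightarrow> cfun \<Rightarrow> bool" where
  "is_l2_proj S w p \<longleftrightarrow> p \<in> S \<and> (\<forall>h\<in>S. l2ip (\<lambda>t. w t - p t) h = 0)"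

definition W0 :: "cfun set" where
  "W0 = l2_closure (l2_span (range (\<lambda>l. Tp l eta)))"

end

theory Submission
  imports Defs "HOL-Probability.Sinc_Integral"
begin

(* Take w = eta. The kernel K of Xi is a closed subspace of L2, since Xi is bounded and linear
   up to null functions. By the projection theorem eta = k + p with k in K and p orthogonal to K,
   and then p is the projection of eta onto the orthogonal complement of K. If p were null, eta
   would lie in K, so psi = Xi eta would be null; but testing the Parseval identity on the
   indicator of [0, 1] shows that a Parseval wavelet is not null.
   The projection theorem rests on the completeness of L2: an L2-Cauchy sequence is L1-Cauchy
   for the finite measure with density 1 / (1 + t^2), hence has an a.e. convergent subsequence,
   and Fatou's lemma bounds the L2 distance to its limit. Square integrability of eta follows from
   the bound |eta t| <= min 1 (1 / |t|), read off the closed form of its Fourier integral. *)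

definition l2sq :: "cfun \<Rightarrow> real" where
  "l2sq f = (LINT t|lborel. (cmod (f t))^2)"

lemma l2norm_eq_sqrt_l2sq: "l2norm f = sqrt (l2sq f)"
  by (simp add: l2norm_def l2sq_def)

lemma l2sq_nonneg: "0 \<le> l2sq f"
  unfolding l2sq_def by (rule integral_nonneg_AE) auto

lemma l2norm_nonneg: "0 \<le> l2norm f"
  by (simp add: l2norm_eq_sqrt_l2sq l2sq_nonneg)

lemma l2norm_power2: "(l2norm f)^2 = l2sq f"
  by (simp add: l2norm_eq_sqrt_l2sq l2sq_nonneg)

lemma l2norm_diff_commute: "l2norm (\<lambda>t. f t - g t) = l2norm (\<lambda>t. g t - f t)"
  unfolding l2norm_def by (simp add: norm_minus_commute)

lemma l2sq_scale: "l2sq (\<lambda>t. a * f t) = (cmod a)^2 * l2sq f"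
  unfolding l2sq_def by (simp add: norm_mult power_mult_distrib)

lemma l2norm_scale: "l2norm (\<lambda>t. a * f t) = cmod a * l2norm f"
  by (simp add: l2norm_eq_sqrt_l2sq l2sq_scale real_sqrt_mult)

lemma L2_borel_measurable [measurable_dest]: "f \<in> L2 \<Longrightarrow> f \<in> borel_measurable lborel"
  by (simp add: L2_def)

lemma L2_borel_measurable_borel [measurable_dest]: "f \<in> L2 \<Longrightarrow> f \<in> borel_measurable borel"
  by (simp add: L2_def)

lemma borel_measurable_cnj [measurable (raw)]:
  "f \<in> borel_measurable M \<Longrightarrow> (\<lambda>x. cnj (f x)) \<in> borel_measurable M"
  by (rule borel_measurable_continuous_on[where f=cnj]) (auto intro: continuous_intros)

lemma L2_integrable_power2: "f \<in> L2 \<Longrightarrow> integrable lborel (\<lambda>t. (cmod (f t))^2)"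
  by (simp add: L2_def)

lemma L2I: "f \<in> borel_measurable lborel \<Longrightarrow> integrable lborel (\<lambda>t. (cmod (f t))^2) \<Longrightarrow> f \<in> L2"
  by (simp add: L2_def)

lemma L2_zero: "(\<lambda>t. 0) \<in> L2"
  by (rule L2I) auto

lemma norm_lincomb_power2_le:
  "(cmod (a * x + b * y))^2 \<le> 2 * (cmod a)^2 * (cmod x)^2 + 2 * (cmod b)^2 * (cmod y)^2"
proof -
  have "cmod (a * x + b * y) \<le> cmod a * cmod x + cmod b * cmod y"
    by (metis norm_mult norm_triangle_ineq)
  then have "(cmod (a * x + b * y))^2 \<le> (cmod a * cmod x + cmod b * cmod y)^2"
    by (simp add: power_mono)
  also have "\<dots> \<le> 2 * (cmod a * cmod x)^2 + 2 * (cmod b * cmod y)^2"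
    using sum_squares_bound[of "cmod a * cmod x" "cmod b * cmod y"] by (simp add: power2_sum)
  finally show ?thesis by (simp only: power_mult_distrib mult.assoc)
qed

lemma L2_lincomb:
  assumes f: "f \<in> L2" and g: "g \<in> L2"
  shows "(\<lambda>t. a * f t + b * g t) \<in> L2"
proof (rule L2I)
  show "integrable lborel (\<lambda>t. (cmod (a * f t + b * g t))^2)"
  proof (rule Bochner_Integration.integrable_bound)
    show "integrable lborel (\<lambda>t. 2 * (cmod a)^2 * (cmod (f t))^2 + 2 * (cmod b)^2 * (cmod (g t))^2)"
      using L2_integrable_power2[OF f] L2_integrable_power2[OF g] by auto
    show "AE t in lborel. norm ((cmod (a * f t + b * g t))^2)
        \<le> norm (2 * (cmod a)^2 * (cmod (f t))^2 + 2 * (cmod b)^2 * (cmod (g t))^2)"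
      using norm_lincomb_power2_le[of a _ b] by (auto intro!: always_eventually simp del: power_mult_distrib)
  qed (use f g in auto)
qed (use f g in auto)

lemma L2_diff: "f \<in> L2 \<Longrightarrow> g \<in> L2 \<Longrightarrow> (\<lambda>t. f t - g t) \<in> L2"
  using L2_lincomb[of f g 1 "-1"] by simp

lemma L2_scale: "f \<in> L2 \<Longrightarrow> (\<lambda>t. a * f t) \<in> L2"
  using L2_lincomb[of f f a 0] by simp

lemma integrable_l2ip:
  assumes f: "f \<in> L2" and g: "g \<in> L2"
  shows "integrable lborel (\<lambda>t. f t * cnj (g t))"
proof (rule Bochner_Integration.integrable_bound)
  show "integrable lborel (\<lambda>t. (cmod (f t))^2 + (cmod (g t))^2)"
    using L2_integrable_power2[OF f] L2_integrable_power2[OF g] by auto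
  have "cmod (f t * cnj (g t)) \<le> (cmod (f t))^2 + (cmod (g t))^2" for t
  proof -
    have "cmod (f t * cnj (g t)) = cmod (f t) * cmod (g t)"
      by (simp add: norm_mult)
    then show ?thesis
      using sum_squares_bound[of "cmod (f t)" "cmod (g t)"]
        mult_nonneg_nonneg[OF norm_ge_zero norm_ge_zero, of "f t" "g t"] by linarith
  qed
  then show "AE t in lborel. norm (f t * cnj (g t)) \<le> norm ((cmod (f t))^2 + (cmod (g t))^2)"
    by (auto intro!: always_eventually)
qed (use f g in auto)

lemma l2ip_commute: "l2ip g f = cnj (l2ip f g)"
proof -
  have "cnj (l2ip f g) = (LINT t|lborel. cnj (f t * cnj (g t)))"
    unfolding l2ip_def by (rule Bochner_Integration.integral_cnj[symmetric])
  then show ?thesis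
    unfolding l2ip_def by (simp add: mult.commute)
qed

lemma l2ip_lincomb_left:
  assumes "f \<in> L2" "g \<in> L2" "h \<in> L2"
  shows "l2ip (\<lambda>t. a * f t + b * g t) h = a * l2ip f h + b * l2ip g h"
proof -
  have "l2ip (\<lambda>t. a * f t + b * g t) h
      = (LINT t|lborel. a * (f t * cnj (h t)) + b * (g t * cnj (h t)))"
    unfolding l2ip_def by (simp only: distrib_right mult.assoc)
  also have "\<dots> = a * l2ip f h + b * l2ip g h"
    using integrable_l2ip[OF assms(1,3)] integrable_l2ip[OF assms(2,3)] by (simp add: l2ip_def)
  finally show ?thesis .
qed

lemma l2ip_lincomb_right:
  assumes "f \<in> L2" "g \<in> L2" "h \<in> L2"
  shows "l2ip h (\<lambda>t. a * f t + b * g t) = cnj a * l2ip h f + cnj b * l2ip h g"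
  using l2ip_lincomb_left[OF assms, of a b] by (simp add: l2ip_commute[of h])

lemma l2ip_self: "l2ip f f = complex_of_real (l2sq f)"
proof -
  have "(\<lambda>t. f t * cnj (f t)) = (\<lambda>t. complex_of_real ((cmod (f t))^2))"
    by (simp only: complex_norm_square)
  then show ?thesis
    unfolding l2ip_def l2sq_def by (simp only: integral_complex_of_real)
qed

lemma l2sq_diff_scaled:
  assumes u: "u \<in> L2" and h: "h \<in> L2"
  shows "l2sq (\<lambda>t. u t - z * h t) = l2sq u - 2 * Re (cnj z * l2ip u h) + (cmod z)^2 * l2sq h"
proof -
  define v where "v = (\<lambda>t. u t - z * h t)"
  define c where "c = l2ip u h"
  have v_eq: "v = (\<lambda>t. 1 * u t + (-z) * h t)" by (simp add: v_def)
  have v: "v \<in> L2" unfolding v_eq by (rule L2_lincomb[OF u h])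
  have "complex_of_real (l2sq v) = l2ip v v" by (simp only: l2ip_self)
  also have "\<dots> = l2ip u v - z * l2ip h v"
    by (subst (1) v_eq, subst l2ip_lincomb_left[OF u h v]) simp
  also have "l2ip u v = l2sq u - cnj z * c"
    by (subst v_eq, subst l2ip_lincomb_right[OF u h u]) (simp add: l2ip_self c_def)
  also have "l2ip h v = cnj c - cnj z * l2sq h"
    by (subst v_eq, subst l2ip_lincomb_right[OF u h h]) (simp add: l2ip_self l2ip_commute[of h u] c_def)
  also have "l2sq u - cnj z * c - z * (cnj c - cnj z * l2sq h)
      = l2sq u - (cnj z * c + cnj (cnj z * c)) + (z * cnj z) * l2sq h"
    by (simp add: algebra_simps)
  also have "\<dots> = complex_of_real (l2sq u - 2 * Re (cnj z * c) + (cmod z)^2 * l2sq h)"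
    by (simp only: complex_add_cnj complex_norm_square[symmetric]) simp
  finally show ?thesis
    unfolding v_def c_def of_real_eq_iff .
qed

lemma l2sq_diff_real_multiple:
  assumes "u \<in> L2" "h \<in> L2"
  shows "l2sq (\<lambda>t. u t - (complex_of_real s * l2ip u h) * h t)
       = l2sq u - 2 * s * (cmod (l2ip u h))^2 + s^2 * (cmod (l2ip u h))^2 * l2sq h"
proof -
  define c where "c = l2ip u h"
  have "l2sq (\<lambda>t. u t - (complex_of_real s * c) * h t)
      = l2sq u - 2 * Re (cnj (complex_of_real s * c) * c) + (cmod (complex_of_real s * c))^2 * l2sq h"
    unfolding c_def by (rule l2sq_diff_scaled[OF assms])
  also have "cnj (complex_of_real s * c) * c = complex_of_real (s * (cmod c)^2)"
  proof -
    have "cnj c * c = complex_of_real ((cmod c)^2)"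
      by (simp only: complex_norm_square mult.commute)
    then show ?thesis by (simp add: mult.assoc mult.left_commute)
  qed
  also have "(cmod (complex_of_real s * c))^2 = s^2 * (cmod c)^2"
    by (simp add: norm_mult power_mult_distrib)
  finally show ?thesis unfolding c_def by (simp add: mult.assoc)
qed

lemma cauchy_schwarz_power2:
  assumes u: "u \<in> L2" and h: "h \<in> L2"
  shows "(cmod (l2ip u h))^2 \<le> l2sq u * l2sq h"
proof -
  define C where "C = (cmod (l2ip u h))^2"
  have C0: "0 \<le> C" unfolding C_def by simp
  have quad: "0 \<le> l2sq u - 2 * s * C + s^2 * C * l2sq h" for s
    using l2sq_nonneg l2sq_diff_real_multiple[OF u h, of s] unfolding C_def by metis
  show ?thesis
  proof (cases "l2sq h = 0")
    case True
    have "C \<le> 0"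
    proof (rule ccontr)
      assume "\<not> C \<le> 0"
      then show False
        using quad[of "(l2sq u + 1) / (2 * C)"] True by (simp add: field_simps)
    qed
    then show ?thesis using True C0 by (simp add: C_def)
  next
    case False
    then have hp: "l2sq h > 0" using l2sq_nonneg[of h] by simp
    have "0 \<le> l2sq u - C / l2sq h"
      using quad[of "1 / l2sq h"] hp by (simp add: field_simps power2_eq_square)
    then show ?thesis using hp by (simp add: C_def field_simps)
  qed
qed

lemma cauchy_schwarz:
  assumes "u \<in> L2" "h \<in> L2"
  shows "cmod (l2ip u h) \<le> l2norm u * l2norm h"
  using real_sqrt_le_mono[OF cauchy_schwarz_power2[OF assms]]
  by (simp add: l2norm_eq_sqrt_l2sq real_sqrt_mult)

lemma l2ip_null_left: "f \<in> L2 \<Longrightarrow> g \<in> L2 \<Longrightarrow> l2norm f = 0 \<Longrightarrow> l2ip f g = 0"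
  using cauchy_schwarz[of f g] by simp

lemma l2norm_add:
  assumes u: "u \<in> L2" and h: "h \<in> L2"
  shows "l2norm (\<lambda>t. u t + h t) \<le> l2norm u + l2norm h"
proof -
  have "l2sq (\<lambda>t. u t + h t) = l2sq u + 2 * Re (l2ip u h) + l2sq h"
    using l2sq_diff_scaled[OF u h, of "-1"] by simp
  also have "\<dots> \<le> (l2norm u + l2norm h)^2"
    using complex_Re_le_cmod[of "l2ip u h"] cauchy_schwarz[OF u h]
    by (simp add: power2_sum l2norm_power2)
  finally show ?thesis
    using real_sqrt_le_mono l2norm_nonneg[of u] l2norm_nonneg[of h]
    by (fastforce simp: l2norm_eq_sqrt_l2sq)
qed

lemma l2norm_triangle:
  assumes "f \<in> L2" "g \<in> L2" "k \<in> L2"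
  shows "l2norm (\<lambda>t. f t - g t) \<le> l2norm (\<lambda>t. f t - k t) + l2norm (\<lambda>t. k t - g t)"
  using l2norm_add[OF L2_diff[OF assms(1,3)] L2_diff[OF assms(3,2)]] by simp

lemma l2sq_parallelogram:
  assumes "a \<in> L2" "b \<in> L2"
  shows "l2sq (\<lambda>t. a t + b t) + l2sq (\<lambda>t. a t - b t) = 2 * l2sq a + 2 * l2sq b"
  using l2sq_diff_scaled[OF assms, of "-1"] l2sq_diff_scaled[OF assms, of 1] by simp

definition cauchy_weight :: "real \<Rightarrow> real" where
  "cauchy_weight t = inverse (1 + t^2)"

lemma cauchy_weight_pos: "0 < cauchy_weight t"
  unfolding cauchy_weight_def by (simp add: add_pos_nonneg)

lemma cauchy_weight_le_1: "cauchy_weight t \<le> 1"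
  unfolding cauchy_weight_def by (simp add: inverse_le_1_iff add_nonneg_nonneg)

lemma borel_measurable_cauchy_weight [measurable]: "cauchy_weight \<in> borel_measurable borel"
  unfolding cauchy_weight_def by measurable

lemma integrable_cauchy_weight: "integrable lborel cauchy_weight"
proof -
  have "set_integrable lborel (einterval (-\<infinity>) \<infinity>) (\<lambda>x. inverse (1 + x^2))"
    by (rule integrable_inverse_1_plus_square)
  moreover have "einterval (-\<infinity>) \<infinity> = UNIV" by (auto simp: einterval_def)
  ultimately show ?thesis unfolding set_integrable_def cauchy_weight_def by simp
qed

lemma cauchy_weight_L2: "(\<lambda>t. complex_of_real (cauchy_weight t)) \<in> L2"
proof (rule L2I)
  have "(cauchy_weight t)^2 \<le> cauchy_weight t" for t
    using cauchy_weight_le_1[of t] cauchy_weight_pos[of t]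
    by (simp add: power2_eq_square mult_le_cancel_right1)
  then have "AE t in lborel. norm ((cmod (complex_of_real (cauchy_weight t)))^2) \<le> norm (cauchy_weight t)"
    using cauchy_weight_pos by (intro always_eventually) (simp add: abs_of_pos)
  then show "integrable lborel (\<lambda>t. (cmod (complex_of_real (cauchy_weight t)))^2)"
    by (intro Bochner_Integration.integrable_bound[OF integrable_cauchy_weight]) simp_all
qed simp

lemma weighted_integral_le_l2norm:
  assumes g: "g \<in> L2"
  shows "(LINT t|lborel. cauchy_weight t * cmod (g t))
           \<le> l2norm g * l2norm (\<lambda>t. complex_of_real (cauchy_weight t))"
proof -
  let ?w = "\<lambda>t. complex_of_real (cauchy_weight t)"
  define u where "u = (\<lambda>t. complex_of_real (cmod (g t)))"
  have u: "u \<in> L2"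
    using L2_integrable_power2[OF g] g unfolding u_def by (intro L2I) auto
  have "(\<lambda>t. u t * cnj (?w t)) = (\<lambda>t. complex_of_real (cauchy_weight t * cmod (g t)))"
    by (auto simp: u_def)
  then have "l2ip u ?w = complex_of_real (LINT t|lborel. cauchy_weight t * cmod (g t))"
    unfolding l2ip_def by (simp only: integral_complex_of_real)
  then have "(LINT t|lborel. cauchy_weight t * cmod (g t)) \<le> cmod (l2ip u ?w)"
    by simp
  also have "\<dots> \<le> l2norm u * l2norm ?w" by (rule cauchy_schwarz[OF u cauchy_weight_L2])
  also have "l2norm u = l2norm g" unfolding u_def l2norm_def by simp
  finally show ?thesis .
qed

definition l2_Cauchy :: "(nat \<Rightarrow> cfun) \<Rightarrow> bool" where
  "l2_Cauchy F \<longleftrightarrow> (\<forall>e>0. \<exists>M. \<forall>m\<ge>M. \<forall>n\<ge>M. l2norm (\<lambda>t. F m t - F n t) < e)"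

lemma l2_CauchyD: "l2_Cauchy F \<Longrightarrow> e > 0 \<Longrightarrow> \<exists>M. \<forall>m\<ge>M. \<forall>n\<ge>M. l2norm (\<lambda>t. F m t - F n t) < e"
  by (simp add: l2_Cauchy_def)

lemma integrable_weighted_if_L2:
  assumes f: "f \<in> L2"
  shows "integrable (density lborel (\<lambda>t. ennreal (cauchy_weight t))) f"
proof -
  have "(\<lambda>x. cauchy_weight x *\<^sub>R f x) = (\<lambda>x. f x * cnj (complex_of_real (cauchy_weight x)))"
    by (auto simp: scaleR_conv_of_real)
  then have "integrable lborel (\<lambda>x. cauchy_weight x *\<^sub>R f x)"
    using integrable_l2ip[OF f cauchy_weight_L2] by simp
  then show ?thesis
    using f by (subst integrable_density) (auto simp: cauchy_weight_pos less_imp_le)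
qed

lemma weighted_L1_Cauchy_if_l2_Cauchy:
  assumes F: "\<And>n. F n \<in> L2" and Cauchy: "l2_Cauchy F" and e: "e > 0"
  shows "\<exists>N. \<forall>i\<ge>N. \<forall>j\<ge>N.
           (LINT x|density lborel (\<lambda>t. ennreal (cauchy_weight t)). norm (F i x - F j x)) < e"
proof -
  define K where "K = l2norm (\<lambda>t. complex_of_real (cauchy_weight t)) + 1"
  have K: "K > 0"
    unfolding K_def using l2norm_nonneg[of "\<lambda>t. complex_of_real (cauchy_weight t)"] by linarith
  obtain N where N: "\<forall>m\<ge>N. \<forall>n\<ge>N. l2norm (\<lambda>t. F m t - F n t) < e / K"
    using l2_CauchyD[OF Cauchy, of "e / K"] K e by auto
  have "(LINT x|density lborel (\<lambda>t. ennreal (cauchy_weight t)). norm (F i x - F j x)) < e"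
    if "i \<ge> N" "j \<ge> N" for i j
  proof -
    have "(LINT x|density lborel (\<lambda>t. ennreal (cauchy_weight t)). norm (F i x - F j x))
        = (LINT x|lborel. cauchy_weight x * cmod (F i x - F j x))"
      using F by (subst integral_density) (auto simp: cauchy_weight_pos less_imp_le)
    also have "\<dots> \<le> l2norm (\<lambda>t. F i t - F j t) * l2norm (\<lambda>t. complex_of_real (cauchy_weight t))"
      by (rule weighted_integral_le_l2norm[OF L2_diff[OF F F]])
    also have "\<dots> \<le> l2norm (\<lambda>t. F i t - F j t) * K"
      unfolding K_def by (intro mult_left_mono l2norm_nonneg) simp
    also have "\<dots> < e" using N that K by (simp add: pos_less_divide_eq)
    finally show ?thesis .
  qed
  then show ?thesis by blast
qed

lemma L2_Cauchy_AE_convergent_subseq: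
  fixes F :: "nat \<Rightarrow> cfun"
  assumes F: "\<And>n. F n \<in> L2"
    and Cauchy: "l2_Cauchy F"
  obtains r f where "strict_mono r" "f \<in> borel_measurable lborel"
    "AE x in lborel. (\<lambda>i. F (r i) x) \<longlonglongrightarrow> f x"
proof -
  note [measurable] = L2_borel_measurable[OF F] L2_borel_measurable_borel[OF F]
  obtain r where r: "strict_mono r"
    and AE_weighted: "AE x in density lborel (\<lambda>t. ennreal (cauchy_weight t)). Cauchy (\<lambda>i. F (r i) x)"
    using cauchy_L1_AE_cauchy_subseq[OF integrable_weighted_if_L2[OF F]
        weighted_L1_Cauchy_if_l2_Cauchy[OF F Cauchy]] by blast
  have "AE x in lborel. Cauchy (\<lambda>i. F (r i) x)"
    using AE_weighted F by (subst (asm) AE_density) (auto simp: cauchy_weight_pos)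
  then have "AE x in lborel. (\<lambda>i. F (r i) x) \<longlonglongrightarrow> lim (\<lambda>i. F (r i) x)"
    by eventually_elim (simp add: Cauchy_convergent_iff convergent_LIMSEQ_iff)
  moreover have "(\<lambda>x. lim (\<lambda>i. F (r i) x)) \<in> borel_measurable lborel"
    by measurable
  ultimately show ?thesis using r that by blast
qed

lemma nn_integral_le_if_AE_tendsto:
  fixes u :: "nat \<Rightarrow> 'a \<Rightarrow> real"
  assumes [measurable]: "\<And>i. u i \<in> borel_measurable M"
    and lim: "AE x in M. (\<lambda>i. u i x) \<longlonglongrightarrow> v x"
    and bound: "\<And>i. i \<ge> N \<Longrightarrow> (\<integral>\<^sup>+x. ennreal (u i x) \<partial>M) \<le> c"
  shows "(\<integral>\<^sup>+x. ennreal (v x) \<partial>M) \<le> c"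
proof -
  have "(\<integral>\<^sup>+x. ennreal (v x) \<partial>M) = (\<integral>\<^sup>+x. liminf (\<lambda>i. ennreal (u i x)) \<partial>M)"
    using lim
  proof (intro nn_integral_cong_AE, eventually_elim)
    case (elim x)
    then have "(\<lambda>i. ennreal (u i x)) \<longlonglongrightarrow> ennreal (v x)"
      using tendsto_ennrealI by blast
    then have "liminf (\<lambda>i. ennreal (u i x)) = ennreal (v x)"
      by (rule lim_imp_Liminf[OF sequentially_bot])
    then show ?case by simp
  qed
  also have "\<dots> \<le> liminf (\<lambda>i. \<integral>\<^sup>+x. ennreal (u i x) \<partial>M)"
    by (intro nn_integral_liminf) measurable
  also have "\<dots> \<le> c"
    using bound by (intro Liminf_le) (auto simp: eventually_sequentially)
  finally show ?thesis .
qed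

lemma l2norm_diff_AE_limit_le:
  fixes F :: "nat \<Rightarrow> cfun"
  assumes g: "g \<in> L2" and F: "\<And>n. F n \<in> L2" and f: "f \<in> borel_measurable lborel"
    and lim: "AE x in lborel. (\<lambda>i. F i x) \<longlonglongrightarrow> f x"
    and bound: "\<And>i. i \<ge> N \<Longrightarrow> l2norm (\<lambda>t. g t - F i t) \<le> e"
  shows "(\<lambda>t. g t - f t) \<in> L2" and "l2norm (\<lambda>t. g t - f t) \<le> e"
proof -
  note [measurable] = L2_borel_measurable[OF g] L2_borel_measurable_borel[OF g]
    L2_borel_measurable[OF F] L2_borel_measurable_borel[OF F]
  have e: "0 \<le> e"
    using bound[of N] l2norm_nonneg[of "\<lambda>t. g t - F N t"] by linarith
  have nn_bound_i: "(\<integral>\<^sup>+x. ennreal ((cmod (g x - F i x))^2) \<partial>lborel) \<le> ennreal (e^2)"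
    if "i \<ge> N" for i
  proof -
    have "(\<integral>\<^sup>+x. ennreal ((cmod (g x - F i x))^2) \<partial>lborel) = ennreal (l2sq (\<lambda>t. g t - F i t))"
      unfolding l2sq_def
      by (rule nn_integral_eq_integral[OF L2_integrable_power2[OF L2_diff[OF g F]]]) simp
    also have "\<dots> \<le> ennreal (e^2)"
      using bound[OF that] l2norm_nonneg
      by (intro ennreal_leI) (auto simp flip: l2norm_power2 intro: power_mono)
    finally show ?thesis .
  qed
  have "AE x in lborel. (\<lambda>i. (cmod (g x - F i x))^2) \<longlonglongrightarrow> (cmod (g x - f x))^2"
    using lim by eventually_elim (intro tendsto_intros)
  from nn_integral_le_if_AE_tendsto[OF _ this nn_bound_i]
  have nn_bound: "(\<integral>\<^sup>+x. ennreal ((cmod (g x - f x))^2) \<partial>lborel) \<le> ennreal (e^2)"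
    by simp
  have int: "integrable lborel (\<lambda>x. (cmod (g x - f x))^2)"
    using g f nn_bound by (intro integrableI_bounded) (auto simp: top.not_eq_extremum order_le_less_trans)
  show "(\<lambda>t. g t - f t) \<in> L2"
    using g f int by (intro L2I) auto
  have "ennreal (l2sq (\<lambda>t. g t - f t)) \<le> ennreal (e^2)"
    using nn_bound nn_integral_eq_integral[OF int] by (simp add: l2sq_def)
  then have "l2sq (\<lambda>t. g t - f t) \<le> e^2" by (simp add: ennreal_le_iff)
  then have "sqrt (l2sq (\<lambda>t. g t - f t)) \<le> sqrt (e^2)" by (rule real_sqrt_le_mono)
  then show "l2norm (\<lambda>t. g t - f t) \<le> e"
    using e by (simp add: l2norm_eq_sqrt_l2sq)
qed

lemma L2_complete:
  fixes F :: "nat \<Rightarrow> cfun"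
  assumes F: "\<And>n. F n \<in> L2"
    and Cauchy: "l2_Cauchy F"
  obtains f where "f \<in> L2" "(\<lambda>n. l2norm (\<lambda>t. F n t - f t)) \<longlonglongrightarrow> 0"
proof -
  obtain r f where r: "strict_mono r" and f: "f \<in> borel_measurable lborel"
    and lim: "AE x in lborel. (\<lambda>i. F (r i) x) \<longlonglongrightarrow> f x"
    using L2_Cauchy_AE_convergent_subseq[OF F Cauchy] by blast
  have close: "(\<lambda>t. F n t - f t) \<in> L2 \<and> l2norm (\<lambda>t. F n t - f t) \<le> e"
    if N: "\<forall>m\<ge>N. \<forall>n\<ge>N. l2norm (\<lambda>t. F m t - F n t) < e" and n: "n \<ge> N" for e N n
  proof -
    have "l2norm (\<lambda>t. F n t - F (r i) t) \<le> e" if "i \<ge> N" for i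
    proof -
      have "r i \<ge> N" using that seq_suble[OF r, of i] by linarith
      then show ?thesis using N n by (simp add: less_imp_le)
    qed
    then show ?thesis
      using l2norm_diff_AE_limit_le[OF F F f lim] by blast
  qed
  obtain N1 where "\<forall>m\<ge>N1. \<forall>n\<ge>N1. l2norm (\<lambda>t. F m t - F n t) < 1"
    using l2_CauchyD[OF Cauchy, of 1] by auto
  then have "(\<lambda>t. F N1 t - f t) \<in> L2"
    using close[of N1 1 N1] by blast
  then have "(\<lambda>t. F N1 t - (F N1 t - f t)) \<in> L2"
    by (rule L2_diff[OF F])
  then have "f \<in> L2" by simp
  moreover have "(\<lambda>n. l2norm (\<lambda>t. F n t - f t)) \<longlonglongrightarrow> 0"
  proof (rule LIMSEQ_I)
    fix e :: real assume e: "e > 0"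
    then obtain N where N: "\<forall>m\<ge>N. \<forall>n\<ge>N. l2norm (\<lambda>t. F m t - F n t) < e / 2"
      using l2_CauchyD[OF Cauchy, of "e / 2"] by auto
    have "norm (l2norm (\<lambda>t. F n t - f t) - 0) < e" if "n \<ge> N" for n
      using close[OF N that] e l2norm_nonneg[of "\<lambda>t. F n t - f t"] by simp
    then show "\<exists>N. \<forall>n\<ge>N. norm (l2norm (\<lambda>t. F n t - f t) - 0) < e" by blast
  qed
  ultimately show ?thesis using that by blast
qed

definition l2_closed_subspace :: "cfun set \<Rightarrow> bool" where
  "l2_closed_subspace K \<longleftrightarrow> K \<subseteq> L2 \<and> (\<lambda>t. 0) \<in> K \<and>
     (\<forall>f\<in>K. \<forall>g\<in>K. \<forall>a b. (\<lambda>t. a * f t + b * g t) \<in> K) \<and> l2_closure K \<subseteq> K"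

lemma l2_closed_subspaceD:
  assumes "l2_closed_subspace K"
  shows "K \<subseteq> L2" and "(\<lambda>t. 0) \<in> K"
    and "\<And>f g a b. f \<in> K \<Longrightarrow> g \<in> K \<Longrightarrow> (\<lambda>t. a * f t + b * g t) \<in> K"
    and "\<And>f. f \<in> L2 \<Longrightarrow> (\<And>e. e > 0 \<Longrightarrow> \<exists>g\<in>K. l2norm (\<lambda>t. f t - g t) < e) \<Longrightarrow> f \<in> K"
  using assms unfolding l2_closed_subspace_def l2_closure_def by blast+

lemma l2sq_diff_midpoint:
  assumes "w \<in> L2" "a \<in> L2" "b \<in> L2"
  shows "l2sq (\<lambda>t. a t - b t) + 4 * l2sq (\<lambda>t. w t - ((1/2) * a t + (1/2) * b t))
       = 2 * l2sq (\<lambda>t. w t - a t) + 2 * l2sq (\<lambda>t. w t - b t)"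
proof -
  have "l2sq (\<lambda>t. (w t - a t) + (w t - b t)) = 4 * l2sq (\<lambda>t. w t - ((1/2) * a t + (1/2) * b t))"
    using l2sq_scale[of 2 "\<lambda>t. w t - ((1/2) * a t + (1/2) * b t)"] by (simp add: algebra_simps)
  moreover have "l2sq (\<lambda>t. (w t - a t) - (w t - b t)) = l2sq (\<lambda>t. a t - b t)"
    unfolding l2sq_def by (simp add: norm_minus_commute)
  ultimately show ?thesis
    using l2sq_parallelogram[OF L2_diff[OF assms(1,2)] L2_diff[OF assms(1,3)]] by simp
qed

lemma l2_Cauchy_if_minimizing:
  assumes w: "w \<in> L2" and kk: "\<And>n. kk n \<in> L2"
    and mid: "\<And>m n. \<delta> \<le> l2sq (\<lambda>t. w t - ((1/2) * kk m t + (1/2) * kk n t))"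
    and less: "\<And>n. l2sq (\<lambda>t. w t - kk n t) < \<delta> + inverse (real (Suc n))"
  shows "l2_Cauchy kk"
  unfolding l2_Cauchy_def
proof (intro allI impI)
  fix e :: real assume e: "e > 0"
  obtain M where M: "inverse (real (Suc M)) < e^2 / 4"
    using reals_Archimedean[of "e^2 / 4"] e by auto
  have "l2norm (\<lambda>t. kk m t - kk n t) < e" if "m \<ge> M" "n \<ge> M" for m n
  proof -
    have "inverse (real (Suc m)) \<le> inverse (real (Suc M))" "inverse (real (Suc n)) \<le> inverse (real (Suc M))"
      using that by (simp_all add: field_simps)
    then have "l2sq (\<lambda>t. kk m t - kk n t) < e^2"
      using l2sq_diff_midpoint[OF w kk kk, of m n] less[of m] less[of n] mid[of m n] M by linarith
    then show ?thesis
      using e real_sqrt_less_mono by (fastforce simp: l2norm_eq_sqrt_l2sq)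
  qed
  then show "\<exists>M. \<forall>m\<ge>M. \<forall>n\<ge>M. l2norm (\<lambda>t. kk m t - kk n t) < e" by blast
qed

lemma l2sq_diff_le_if_tendsto:
  assumes w: "w \<in> L2" and k: "k \<in> L2" and kk: "\<And>n. kk n \<in> L2"
    and lim: "(\<lambda>n. l2norm (\<lambda>t. kk n t - k t)) \<longlonglongrightarrow> 0"
    and sq_lim: "(\<lambda>n. l2sq (\<lambda>t. w t - kk n t)) \<longlonglongrightarrow> \<delta>"
  shows "l2sq (\<lambda>t. w t - k t) \<le> \<delta>"
proof -
  have "(\<lambda>n. sqrt (l2sq (\<lambda>t. w t - kk n t)) + l2norm (\<lambda>t. kk n t - k t)) \<longlonglongrightarrow> sqrt \<delta> + 0"
    by (intro tendsto_add tendsto_real_sqrt lim sq_lim)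
  moreover have "l2norm (\<lambda>t. w t - k t) \<le> sqrt (l2sq (\<lambda>t. w t - kk n t)) + l2norm (\<lambda>t. kk n t - k t)"
    for n
    using l2norm_triangle[OF w k kk[of n]] by (simp add: l2norm_eq_sqrt_l2sq)
  ultimately have "l2norm (\<lambda>t. w t - k t) \<le> sqrt \<delta>"
    using LIMSEQ_le_const by fastforce
  then show ?thesis by (simp add: l2norm_eq_sqrt_l2sq)
qed

lemma l2_best_approximation:
  assumes K: "l2_closed_subspace K" and w: "w \<in> L2"
  obtains k where "k \<in> K" "\<And>k'. k' \<in> K \<Longrightarrow> l2sq (\<lambda>t. w t - k t) \<le> l2sq (\<lambda>t. w t - k' t)"
proof -
  define \<delta> where "\<delta> = (INF k\<in>K. l2sq (\<lambda>t. w t - k t))"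
  have bdd: "bdd_below ((\<lambda>k. l2sq (\<lambda>t. w t - k t)) ` K)"
    by (rule bdd_belowI[of _ 0]) (auto simp: l2sq_nonneg)
  have \<delta>_le: "\<delta> \<le> l2sq (\<lambda>t. w t - k t)" if "k \<in> K" for k
    unfolding \<delta>_def using that by (rule cINF_lower[OF bdd])
  have K_ne: "K \<noteq> {}" using l2_closed_subspaceD(2)[OF K] by blast
  have "\<exists>k\<in>K. l2sq (\<lambda>t. w t - k t) < \<delta> + inverse (real (Suc n))" for n
    unfolding \<delta>_def by (rule cINF_less_iff[OF K_ne bdd, THEN iffD1]) simp
  then obtain kk where kk: "\<And>n. kk n \<in> K"
    and kk_less: "\<And>n. l2sq (\<lambda>t. w t - kk n t) < \<delta> + inverse (real (Suc n))"
    by metis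
  have kk_L2: "kk n \<in> L2" for n using kk l2_closed_subspaceD(1)[OF K] by blast
  have Cauchy: "l2_Cauchy kk"
    by (rule l2_Cauchy_if_minimizing[OF w kk_L2 _ kk_less])
      (rule \<delta>_le[OF l2_closed_subspaceD(3)[OF K kk kk]])
  obtain k where k: "k \<in> L2" and lim: "(\<lambda>n. l2norm (\<lambda>t. kk n t - k t)) \<longlonglongrightarrow> 0"
    using L2_complete[OF kk_L2 Cauchy] by blast
  have "k \<in> K"
  proof (rule l2_closed_subspaceD(4)[OF K k])
    fix e :: real assume "e > 0"
    then have "\<forall>\<^sub>F n in sequentially. l2norm (\<lambda>t. kk n t - k t) < e"
      by (rule order_tendstoD(2)[OF lim])
    then obtain n where "l2norm (\<lambda>t. kk n t - k t) < e"
      by (auto simp: eventually_sequentially)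
    then show "\<exists>g\<in>K. l2norm (\<lambda>t. k t - g t) < e"
      using kk by (auto simp: l2norm_diff_commute)
  qed
  moreover have "(\<lambda>n. l2sq (\<lambda>t. w t - kk n t)) \<longlonglongrightarrow> \<delta>"
  proof (rule tendsto_sandwich[of "\<lambda>_. \<delta>" _ _ "\<lambda>n. \<delta> + inverse (real (Suc n))"])
    show "(\<lambda>n. \<delta> + inverse (real (Suc n))) \<longlonglongrightarrow> \<delta>"
      using tendsto_add[OF tendsto_const LIMSEQ_inverse_real_of_nat, of \<delta>] by simp
  qed (use \<delta>_le kk kk_less[THEN less_imp_le] in \<open>auto intro!: always_eventually\<close>)
  then have "l2sq (\<lambda>t. w t - k t) \<le> \<delta>"
    by (rule l2sq_diff_le_if_tendsto[OF w k kk_L2 lim])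
  ultimately show ?thesis using that \<delta>_le by fastforce
qed

lemma is_l2_proj_if_best_approximation:
  assumes K: "l2_closed_subspace K" and w: "w \<in> L2" and k: "k \<in> K"
    and min: "\<And>k'. k' \<in> K \<Longrightarrow> l2sq (\<lambda>t. w t - k t) \<le> l2sq (\<lambda>t. w t - k' t)"
  shows "is_l2_proj K w k"
  unfolding is_l2_proj_def
proof (intro conjI k ballI)
  fix h assume h: "h \<in> K"
  have h_L2: "h \<in> L2" and k_L2: "k \<in> L2" using h k l2_closed_subspaceD(1)[OF K] by blast+
  define u where "u = (\<lambda>t. w t - k t)"
  have u: "u \<in> L2" unfolding u_def by (rule L2_diff[OF w k_L2])
  define C where "C = (cmod (l2ip u h))^2"
  define s where "s = inverse (l2sq h + 1)"
  have s: "s > 0" "s * l2sq h < 1"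
    unfolding s_def using l2sq_nonneg[of h] by (simp_all add: field_simps)
  (* Moving k by s <w - k, h> h lowers the distance to w unless <w - k, h> = 0. *)
  have "l2sq u \<le> l2sq (\<lambda>t. w t - (1 * k t + (complex_of_real s * l2ip u h) * h t))"
    unfolding u_def by (intro min l2_closed_subspaceD(3)[OF K k h])
  also have "\<dots> = l2sq u - 2 * s * C + s^2 * C * l2sq h"
    unfolding C_def using l2sq_diff_real_multiple[OF u h_L2, of s] by (simp add: u_def algebra_simps)
  finally have "0 \<le> s * C * (s * l2sq h - 2)"
    by (simp add: algebra_simps power2_eq_square)
  then have "0 \<le> C * (s * (s * l2sq h - 2))" by (simp add: mult_ac)
  moreover have "s * (s * l2sq h - 2) < 0" using s by (simp add: mult_pos_neg)
  moreover have "C \<ge> 0" unfolding C_def by simp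
  ultimately have "C = 0"
    using zero_le_mult_iff[of C "s * (s * l2sq h - 2)"] by linarith
  then show "l2ip (\<lambda>t. w t - k t) h = 0" unfolding C_def u_def by simp
qed

lemma l2_projection_exists:
  assumes "l2_closed_subspace K" "w \<in> L2"
  shows "\<exists>k. is_l2_proj K w k"
  using l2_best_approximation[OF assms] is_l2_proj_if_best_approximation[OF assms] by metis

lemma is_l2_proj_orth_complement:
  assumes K: "l2_closed_subspace K" and w: "w \<in> L2" and k: "is_l2_proj K w k"
  shows "is_l2_proj (l2_orth K) w (\<lambda>t. w t - k t)"
proof -
  have k_K: "k \<in> K" and orth: "\<And>h. h \<in> K \<Longrightarrow> l2ip (\<lambda>t. w t - k t) h = 0"
    using k unfolding is_l2_proj_def by blast+
  have "(\<lambda>t. w t - k t) \<in> L2"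
    using L2_diff[OF w] k_K l2_closed_subspaceD(1)[OF K] by blast
  then have "(\<lambda>t. w t - k t) \<in> l2_orth K"
    unfolding l2_orth_def using orth by (auto simp: l2ip_commute[of _ "\<lambda>t. w t - k t"])
  moreover have "l2ip (\<lambda>t. w t - (w t - k t)) h = 0" if "h \<in> l2_orth K" for h
    using that k_K by (simp add: l2_orth_def)
  ultimately show ?thesis unfolding is_l2_proj_def by blast
qed

lemma is_l2_proj_orth_complement_null_imp_mem:
  assumes K: "l2_closed_subspace K" and w: "w \<in> L2"
    and p: "is_l2_proj (l2_orth K) w p" and null: "l2norm p = 0"
  shows "w \<in> K"
proof -
  obtain k where k: "is_l2_proj K w k" using l2_projection_exists[OF K w] by blast
  have k_K: "k \<in> K" using k unfolding is_l2_proj_def by blast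
  then have k_L2: "k \<in> L2" using l2_closed_subspaceD(1)[OF K] by blast
  define q where "q = (\<lambda>t. w t - k t)"
  have q: "q \<in> l2_orth K"
    using is_l2_proj_orth_complement[OF K w k] unfolding q_def is_l2_proj_def by blast
  then have q_L2: "q \<in> L2" by (simp add: l2_orth_def)
  (* q is orthogonal to w (as both w - p and the null p are) and to k, hence null. *)
  have p_L2: "p \<in> L2" using p by (simp add: is_l2_proj_def l2_orth_def)
  have "l2ip w q = l2ip (\<lambda>t. w t - p t) q + l2ip p q"
    using l2ip_lincomb_left[OF L2_diff[OF w p_L2] p_L2 q_L2, of 1 1] by simp
  also have "\<dots> = 0"
    using p q l2ip_null_left[OF p_L2 q_L2 null] unfolding is_l2_proj_def by simp
  finally have "l2ip w q = 0" .
  moreover have "l2ip k q = 0" using q k_K by (simp add: l2_orth_def)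
  ultimately have "l2ip q q = 0"
    using l2ip_lincomb_left[OF w k_L2 q_L2, of 1 "-1"] by (simp add: q_def)
  then have "l2norm (\<lambda>t. w t - k t) = 0"
    by (simp add: l2ip_self l2norm_eq_sqrt_l2sq q_def)
  then show ?thesis
    using k_K by (intro l2_closed_subspaceD(4)[OF K w]) (auto intro!: bexI[of _ k])
qed

lemma l2norm_image_lincomb_le:
  assumes maps: "\<forall>f\<in>L2. Xi f \<in> L2"
    and lin: "\<forall>f\<in>L2. \<forall>g\<in>L2. \<forall>a b.
           l2norm (\<lambda>t. Xi (\<lambda>s. a * f s + b * g s) t - (a * Xi f t + b * Xi g t)) = 0"
    and f: "f \<in> L2" and g: "g \<in> L2"
  shows "l2norm (Xi (\<lambda>s. a * f s + b * g s)) \<le> cmod a * l2norm (Xi f) + cmod b * l2norm (Xi g)"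
proof -
  let ?L = "\<lambda>s. a * f s + b * g s"
  have Xf: "Xi f \<in> L2" and Xg: "Xi g \<in> L2" and XL: "Xi ?L \<in> L2"
    using maps f g L2_lincomb[OF f g] by blast+
  have comb: "(\<lambda>t. a * Xi f t + b * Xi g t) \<in> L2" by (rule L2_lincomb[OF Xf Xg])
  have "l2norm (Xi ?L)
      = l2norm (\<lambda>t. (Xi ?L t - (a * Xi f t + b * Xi g t)) + (a * Xi f t + b * Xi g t))"
    by simp
  also have "\<dots> \<le> l2norm (\<lambda>t. Xi ?L t - (a * Xi f t + b * Xi g t)) + l2norm (\<lambda>t. a * Xi f t + b * Xi g t)"
    by (rule l2norm_add[OF L2_diff[OF XL comb] comb])
  also have "\<dots> = l2norm (\<lambda>t. a * Xi f t + b * Xi g t)"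
    using lin f g by simp
  also have "\<dots> \<le> l2norm (\<lambda>t. a * Xi f t) + l2norm (\<lambda>t. b * Xi g t)"
    by (rule l2norm_add[OF L2_scale[OF Xf] L2_scale[OF Xg]])
  finally show ?thesis by (simp add: l2norm_scale)
qed

lemma l2_ker_closed:
  assumes maps: "\<forall>f\<in>L2. Xi f \<in> L2"
    and lin: "\<forall>f\<in>L2. \<forall>g\<in>L2. \<forall>a b.
           l2norm (\<lambda>t. Xi (\<lambda>s. a * f s + b * g s) t - (a * Xi f t + b * Xi g t)) = 0"
    and bounded: "\<exists>C. \<forall>f\<in>L2. l2norm (Xi f) \<le> C * l2norm f"
    and f: "f \<in> l2_closure (l2_ker Xi)"
  shows "f \<in> l2_ker Xi"
proof -
  obtain C where C: "\<And>f. f \<in> L2 \<Longrightarrow> l2norm (Xi f) \<le> C * l2norm f"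
    using bounded by blast
  have f_L2: "f \<in> L2" using f by (simp add: l2_closure_def)
  have "l2norm (Xi f) \<le> 0 + e" if e: "e > 0" for e
  proof -
    have "e / (\<bar>C\<bar> + 1) > 0" using e by simp
    then obtain g where "g \<in> l2_ker Xi" and close: "l2norm (\<lambda>t. f t - g t) < e / (\<bar>C\<bar> + 1)"
      using f unfolding l2_closure_def by blast
    then have g: "g \<in> L2" "l2norm (Xi g) = 0" by (simp_all add: l2_ker_def)
    have d: "(\<lambda>t. f t - g t) \<in> L2" by (rule L2_diff[OF f_L2 g(1)])
    have "l2norm (Xi f) \<le> l2norm (Xi (\<lambda>t. f t - g t))"
      using l2norm_image_lincomb_le[OF maps lin g(1) d, of 1 1] g(2) by simp
    also have "\<dots> \<le> C * l2norm (\<lambda>t. f t - g t)" by (rule C[OF d])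
    also have "\<dots> \<le> (\<bar>C\<bar> + 1) * l2norm (\<lambda>t. f t - g t)"
      by (intro mult_right_mono l2norm_nonneg) simp
    also have "\<dots> \<le> e"
      using close by (simp add: pos_less_divide_eq mult.commute less_imp_le)
    finally show ?thesis by simp
  qed
  then have "l2norm (Xi f) \<le> 0" by (rule field_le_epsilon)
  then have "l2norm (Xi f) = 0"
    using l2norm_nonneg[of "Xi f"] by linarith
  then show ?thesis using f_L2 by (simp add: l2_ker_def)
qed

lemma l2_ker_closed_subspace:
  assumes maps: "\<forall>f\<in>L2. Xi f \<in> L2"
    and lin: "\<forall>f\<in>L2. \<forall>g\<in>L2. \<forall>a b.
           l2norm (\<lambda>t. Xi (\<lambda>s. a * f s + b * g s) t - (a * Xi f t + b * Xi g t)) = 0"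
    and bounded: "\<exists>C. \<forall>f\<in>L2. l2norm (Xi f) \<le> C * l2norm f"
  shows "l2_closed_subspace (l2_ker Xi)"
proof -
  obtain C where C: "\<And>f. f \<in> L2 \<Longrightarrow> l2norm (Xi f) \<le> C * l2norm f"
    using bounded by blast
  have "l2norm (\<lambda>t::real. 0::complex) = 0" by (simp add: l2norm_def)
  then have "(\<lambda>t. 0) \<in> l2_ker Xi"
    using C[OF L2_zero] l2norm_nonneg[of "Xi (\<lambda>t. 0)"] L2_zero by (simp add: l2_ker_def)
  moreover have "(\<lambda>t. a * f t + b * g t) \<in> l2_ker Xi"
    if "f \<in> l2_ker Xi" "g \<in> l2_ker Xi" for f g a b
    using that l2norm_image_lincomb_le[OF maps lin, of f g a b] L2_lincomb
      l2norm_nonneg[of "Xi (\<lambda>t. a * f t + b * g t)"]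
    by (simp add: l2_ker_def)
  ultimately show ?thesis
    using l2_ker_closed[OF maps lin bounded]
    unfolding l2_closed_subspace_def l2_ker_def by blast
qed

definition interval_exp_integral :: "real \<Rightarrow> real \<Rightarrow> real \<Rightarrow> complex" where
  "interval_exp_integral a b t = (LINT s|lborel. indicator {a..b} s *\<^sub>R exp (\<i> * complex_of_real (t * s)))"

lemma integrable_interval_exp:
  "integrable lborel (\<lambda>s. indicator {a..b} s *\<^sub>R exp (\<i> * complex_of_real (t * s)))"
  by (rule borel_integrable_compact) (auto intro!: continuous_intros)

lemma interval_exp_integral_at_0:
  "a \<le> b \<Longrightarrow> interval_exp_integral a b 0 = complex_of_real (b - a)"
  by (simp add: interval_exp_integral_def scaleR_conv_of_real)

lemma interval_exp_integral_eq:
  assumes ab: "a \<le> b" and t: "t \<noteq> 0"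
  shows "interval_exp_integral a b t
       = (exp (\<i> * complex_of_real (t * b)) - exp (\<i> * complex_of_real (t * a))) / (\<i> * complex_of_real t)"
proof -
  define G where "G = (\<lambda>x. exp (\<i> * complex_of_real (t * x)) / (\<i> * complex_of_real t))"
  have "(G has_vector_derivative exp (\<i> * complex_of_real (t * x))) (at x within {a..b})" for x
  proof -
    have "((\<lambda>z. exp (\<i> * (complex_of_real t * z)) / (\<i> * complex_of_real t)) has_field_derivative
        exp (\<i> * complex_of_real (t * x))) (at (complex_of_real x))"
      using t by (auto intro!: derivative_eq_intros simp: field_simps)
    from has_vector_derivative_real_field[OF this] show ?thesis
      by (simp add: G_def)
  qed
  then have "interval_exp_integral a b t = G b - G a"
    unfolding interval_exp_integral_def
    by (intro integral_FTC_atLeastAtMost[OF ab]) (auto intro!: continuous_intros)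
  then show ?thesis by (simp add: G_def diff_divide_distrib)
qed

lemma norm_interval_exp_integral_le_length:
  assumes "a \<le> b"
  shows "cmod (interval_exp_integral a b t) \<le> b - a"
proof -
  have "cmod (interval_exp_integral a b t)
      \<le> (LINT s|lborel. norm (indicator {a..b} s *\<^sub>R exp (\<i> * complex_of_real (t * s))))"
    unfolding interval_exp_integral_def by (rule integral_norm_bound)
  also have "\<dots> = (LINT s|lborel. indicator {a..b} s)"
    by (intro Bochner_Integration.integral_cong) (auto simp: indicator_def norm_exp_i_times)
  finally show ?thesis using assms by simp
qed

lemma norm_interval_exp_integral_le_inverse:
  assumes "a \<le> b" "t \<noteq> 0"
  shows "cmod (interval_exp_integral a b t) \<le> 2 / \<bar>t\<bar>"
proof -
  have "cmod (exp (\<i> * complex_of_real (t * b)) - exp (\<i> * complex_of_real (t * a))) \<le> 2"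
    using norm_triangle_ineq4[of "exp (\<i> * complex_of_real (t * b))" "exp (\<i> * complex_of_real (t * a))"]
    by (simp add: norm_exp_i_times)
  then show ?thesis
    using assms(2) unfolding interval_exp_integral_eq[OF assms]
    by (simp add: norm_divide norm_mult divide_right_mono)
qed

lemma borel_measurable_interval_exp_integral [measurable]:
  assumes "a \<le> b"
  shows "interval_exp_integral a b \<in> borel_measurable borel"
proof -
  have "interval_exp_integral a b = (\<lambda>t. if t = 0 then complex_of_real (b - a) else
     (exp (\<i> * complex_of_real (t * b)) - exp (\<i> * complex_of_real (t * a))) / (\<i> * complex_of_real t))"
    by (intro ext) (simp add: interval_exp_integral_at_0[OF assms] interval_exp_integral_eq[OF assms])
  also have "\<dots> \<in> borel_measurable borel" by measurable
  finally show ?thesis .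
qed

lemma eta_eq_interval_exp_integrals:
  "eta t = complex_of_real (1 / (2 * pi)) *
     (interval_exp_integral (-2*pi) (-pi) t + interval_exp_integral pi (2*pi) t)"
proof -
  let ?E = "\<lambda>s. exp (\<i> * complex_of_real (t * s))"
  define c where "c = 1 / sqrt (2 * pi)"
  have split: "?E s * eta_hat s
      = complex_of_real c * (indicator {-2*pi..-pi} s *\<^sub>R ?E s + indicator {pi..2*pi} s *\<^sub>R ?E s)" for s
  proof -
    have "\<not> (pi \<le> s \<and> s \<le> -pi)" using pi_gt_zero by linarith
    then have "indicator ({-2*pi..-pi} \<union> {pi..2*pi}) s = (indicator {-2*pi..-pi} s + indicator {pi..2*pi} s :: real)"
      by (auto simp: indicator_def)
    then show ?thesis
      unfolding eta_hat_def c_def by (simp add: scaleR_conv_of_real algebra_simps)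
  qed
  have "(LINT s|lborel. ?E s * eta_hat s)
      = complex_of_real c * (LINT s|lborel. indicator {-2*pi..-pi} s *\<^sub>R ?E s + indicator {pi..2*pi} s *\<^sub>R ?E s)"
    unfolding split by (rule Bochner_Integration.integral_mult_right_zero)
  also have "(LINT s|lborel. indicator {-2*pi..-pi} s *\<^sub>R ?E s + indicator {pi..2*pi} s *\<^sub>R ?E s)
      = interval_exp_integral (-2*pi) (-pi) t + interval_exp_integral pi (2*pi) t"
    unfolding interval_exp_integral_def
    by (rule Bochner_Integration.integral_add[OF integrable_interval_exp integrable_interval_exp])
  finally have "(LINT s|lborel. ?E s * eta_hat s)
      = complex_of_real c * (interval_exp_integral (-2*pi) (-pi) t + interval_exp_integral pi (2*pi) t)" .
  then have "eta t = complex_of_real c * (complex_of_real c *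
      (interval_exp_integral (-2*pi) (-pi) t + interval_exp_integral pi (2*pi) t))"
    unfolding eta_def c_def by simp
  also have "complex_of_real c * (complex_of_real c * X) = complex_of_real (1 / (2 * pi)) * X" for X
  proof -
    have "sqrt (2 * pi) * sqrt (2 * pi) = 2 * pi" using pi_gt_zero by simp
    then have "c * c = 1 / (2 * pi)" unfolding c_def by (simp add: field_simps)
    then show ?thesis by (simp flip: of_real_mult add: mult.assoc[symmetric])
  qed
  finally show ?thesis .
qed

lemma norm_eta_le:
  "cmod (eta t) \<le>
     (cmod (interval_exp_integral (-2*pi) (-pi) t) + cmod (interval_exp_integral pi (2*pi) t)) / (2 * pi)"
proof -
  have "cmod (eta t) =
      cmod (interval_exp_integral (-2*pi) (-pi) t + interval_exp_integral pi (2*pi) t) / (2 * pi)"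
    unfolding eta_eq_interval_exp_integrals norm_mult norm_of_real using pi_gt_zero by simp
  also have "\<dots> \<le> (cmod (interval_exp_integral (-2*pi) (-pi) t) + cmod (interval_exp_integral pi (2*pi) t)) / (2 * pi)"
    using pi_gt_zero by (intro divide_right_mono norm_triangle_ineq) simp
  finally show ?thesis .
qed

lemma norm_eta_le_1: "cmod (eta t) \<le> 1"
proof -
  have "cmod (interval_exp_integral (-2*pi) (-pi) t) + cmod (interval_exp_integral pi (2*pi) t) \<le> pi + pi"
    using norm_interval_exp_integral_le_length[of "-2*pi" "-pi" t]
      norm_interval_exp_integral_le_length[of pi "2*pi" t] pi_gt_zero by simp
  then have "(cmod (interval_exp_integral (-2*pi) (-pi) t) + cmod (interval_exp_integral pi (2*pi) t)) / (2 * pi)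
      \<le> (pi + pi) / (2 * pi)"
    by (rule divide_right_mono) (use pi_gt_zero in simp)
  then have "cmod (eta t) \<le> (pi + pi) / (2 * pi)"
    by (rule order_trans[OF norm_eta_le])
  then show ?thesis using pi_gt_zero by simp
qed

lemma norm_eta_le_inverse: "t \<noteq> 0 \<Longrightarrow> cmod (eta t) \<le> 1 / \<bar>t\<bar>"
proof -
  assume t: "t \<noteq> 0"
  have "cmod (interval_exp_integral (-2*pi) (-pi) t) + cmod (interval_exp_integral pi (2*pi) t)
      \<le> 2 / \<bar>t\<bar> + 2 / \<bar>t\<bar>"
    using norm_interval_exp_integral_le_inverse[of "-2*pi" "-pi" t]
      norm_interval_exp_integral_le_inverse[of pi "2*pi" t] pi_gt_zero t by simp
  then have "(cmod (interval_exp_integral (-2*pi) (-pi) t) + cmod (interval_exp_integral pi (2*pi) t)) / (2 * pi)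
      \<le> (2 / \<bar>t\<bar> + 2 / \<bar>t\<bar>) / (2 * pi)"
    by (rule divide_right_mono) (use pi_gt_zero in simp)
  then have "cmod (eta t) \<le> (2 / \<bar>t\<bar> + 2 / \<bar>t\<bar>) / (2 * pi)"
    by (rule order_trans[OF norm_eta_le])
  also have "\<dots> = (2 / pi) * (1 / \<bar>t\<bar>)" using pi_gt_zero by (simp add: field_simps)
  also have "\<dots> \<le> 1 / \<bar>t\<bar>"
    using pi_gt3 by (intro mult_left_le_one_le) auto
  finally show ?thesis .
qed

lemma norm_eta_power2_le: "(cmod (eta t))^2 \<le> 2 * cauchy_weight t"
proof (cases "t^2 \<le> 1")
  case True
  have "(cmod (eta t))^2 \<le> 1" using norm_eta_le_1[of t] by (simp add: power_le_one)
  also have "\<dots> \<le> 2 / (1 + t^2)" using True by (simp add: add_pos_nonneg le_divide_eq)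
  finally show ?thesis by (simp add: cauchy_weight_def divide_inverse)
next
  case False
  then have t: "t \<noteq> 0" by auto
  have "(cmod (eta t))^2 \<le> (1 / \<bar>t\<bar>)^2"
    using norm_eta_le_inverse[OF t] by (intro power_mono) auto
  also have "\<dots> \<le> 2 * cauchy_weight t"
    unfolding cauchy_weight_def using False t by (simp add: field_simps power_divide)
  finally show ?thesis .
qed

lemma borel_measurable_eta [measurable]: "eta \<in> borel_measurable borel"
proof -
  have "eta = (\<lambda>t. complex_of_real (1 / (2 * pi)) *
     (interval_exp_integral (-2*pi) (-pi) t + interval_exp_integral pi (2*pi) t))"
    using eta_eq_interval_exp_integrals by auto
  also have "\<dots> \<in> borel_measurable borel" using pi_gt_zero by measurable
  finally show ?thesis .
qed

lemma eta_L2: "eta \<in> L2"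
proof (rule L2I)
  have "AE t in lborel. norm ((cmod (eta t))^2) \<le> norm (2 * cauchy_weight t)"
    using norm_eta_power2_le cauchy_weight_pos by (intro always_eventually) (simp add: abs_of_pos)
  from Bochner_Integration.integrable_bound[OF _ _ this]
  show "integrable lborel (\<lambda>t. (cmod (eta t))^2)"
    by (simp add: integrable_cauchy_weight)
qed simp

lemma eta_in_W0: "eta \<in> W0"
proof -
  have "eta \<in> l2_span (range (\<lambda>l. Tp l eta))"
    unfolding l2_span_def
  proof (intro CollectI exI conjI)
    show "{eta} \<subseteq> range (\<lambda>l. Tp l eta)"
      by (auto simp: Tp_def image_iff intro!: exI[of _ 0])
    show "eta = (\<lambda>t. \<Sum>g\<in>{eta}. (\<lambda>_. 1) g * g t)" by simp
  qed simp
  moreover have "l2norm (\<lambda>t. eta t - eta t) = 0" by (simp add: l2norm_def)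
  ultimately show ?thesis
    unfolding W0_def l2_closure_def using eta_L2 by (auto intro!: bexI[of _ eta])
qed

lemma parseval_wavelet_l2norm_nonzero:
  assumes pw: "parseval_wavelet \<psi>"
  shows "l2norm \<psi> \<noteq> 0"
proof
  assume null: "l2norm \<psi> = 0"
  have \<psi>: "\<psi> \<in> L2" using pw by (simp add: parseval_wavelet_def)
  note [measurable] = L2_borel_measurable[OF \<psi>] L2_borel_measurable_borel[OF \<psi>]
  have AE_0: "AE t in lborel. \<psi> t = 0"
    using integral_nonneg_eq_0_iff_AE[OF L2_integrable_power2[OF \<psi>]] null
    by (auto simp: l2norm_def)
  define x where "x = (\<lambda>t::real. complex_of_real (indicator {0..1} t))"
  have x_power2: "(\<lambda>t. (cmod (x t))^2) = indicator {0..1}"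
    by (auto simp: x_def indicator_def)
  have x: "x \<in> L2"
  proof (rule L2I)
    show "x \<in> borel_measurable lborel" unfolding x_def by measurable
  qed (simp add: x_power2)
  have "l2ip x (Dp m (Tp l \<psi>)) = 0" for m l
  proof -
    have "AE t in lborel. \<psi> (- real_of_int l + 2 powr real_of_int m * t) = 0"
      by (rule AE_borel_affine[OF _ _ AE_0]) simp_all
    then have "AE t in lborel. x t * cnj (Dp m (Tp l \<psi>) t) = 0"
      by eventually_elim (simp add: Dp_def Tp_def algebra_simps)
    then show ?thesis unfolding l2ip_def by (rule integral_eq_zero_AE)
  qed
  then have "((\<lambda>(m, l). (cmod (l2ip x (Dp m (Tp l \<psi>))))^2) has_sum 0) (UNIV :: (int \<times> int) set)"
    by (intro has_sum_0) auto
  moreover have "((\<lambda>(m, l). (cmod (l2ip x (Dp m (Tp l \<psi>))))^2) has_sum (l2norm x)^2) UNIV"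
    using pw x by (simp add: parseval_wavelet_def)
  ultimately have "(l2norm x)^2 = 0" using has_sum_unique by blast
  then show False unfolding l2norm_def x_power2 by simp
qed


theorem mainTheorem3:
  fixes \<psi> :: cfun and Xi :: "cfun \<Rightarrow> cfun"
  assumes "parseval_wavelet \<psi>"
    and "\<forall>f\<in>L2. Xi f \<in> L2"
    and "\<forall>f\<in>L2. \<forall>g\<in>L2. \<forall>a b.
           l2norm (\<lambda>t. Xi (\<lambda>s. a * f s + b * g s) t - (a * Xi f t + b * Xi g t)) = 0"
    and "\<exists>C. \<forall>f\<in>L2. l2norm (Xi f) \<le> C * l2norm f"
    and "\<forall>n l. l2norm (\<lambda>t. Xi (Dp n (Tp l eta)) t - Dp n (Tp l \<psi>) t) = 0"
  shows "\<exists>w\<in>W0. (\<exists>p. is_l2_proj (l2_orth (l2_ker Xi)) w p)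
                \<and> (\<forall>p. is_l2_proj (l2_orth (l2_ker Xi)) w p \<longrightarrow> l2norm p \<noteq> 0)"
proof (intro bexI[OF _ eta_in_W0] conjI allI impI notI)
  have K: "l2_closed_subspace (l2_ker Xi)"
    by (rule l2_ker_closed_subspace[OF assms(2-4)])
  show "\<exists>p. is_l2_proj (l2_orth (l2_ker Xi)) eta p"
    using l2_projection_exists[OF K eta_L2] is_l2_proj_orth_complement[OF K eta_L2] by blast
  fix p assume "is_l2_proj (l2_orth (l2_ker Xi)) eta p" and "l2norm p = 0"
  then have "eta \<in> l2_ker Xi"
    by (rule is_l2_proj_orth_complement_null_imp_mem[OF K eta_L2])
  then have Xi_eta: "Xi eta \<in> L2" "l2norm (Xi eta) = 0"
    using assms(2) by (auto simp: l2_ker_def)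
  have \<psi>: "\<psi> \<in> L2" using assms(1) by (simp add: parseval_wavelet_def)
  have "l2norm (\<lambda>t. \<psi> t - Xi eta t) = 0"
    using assms(5)[rule_format, of 0 0] by (simp add: Dp_def Tp_def l2norm_diff_commute)
  then have "l2norm \<psi> \<le> 0"
    using l2norm_add[OF L2_diff[OF \<psi> Xi_eta(1)] Xi_eta(1)] Xi_eta(2) by simp
  then show False
    using parseval_wavelet_l2norm_nonzero[OF assms(1)] l2norm_nonneg[of \<psi>] by simp
qed

end
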